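(* Let $X=\{1,\dots,n\}$, let $a=(1,2,\dots,n)$ be the $n$-cycle, let $S$ be the flip $S(x,y)=(y,x)$ and $\beta(x,y)=(a^{-1}(y),a(x))$. Then $f,g\colon X\times X\to H$ ($H$ a group) is a noncommutative 2-cocycle pair for $(X,S,\beta)$ if and only if $g\equiv 1$ and, for all $x,y,z\in X$, $f(x,y)=f(a(x),a(y))$, $f(x,x)=1$ and $f(x,y)f(x\triangleright y,z)=f(x,z)f(x\triangleright z,y\triangleright z)$, where $x\triangleright y=x$ is the trivial quandle operation (so that $S(x,y)=(y,x\triangleright y)$). In particular, for $n=2$, $f$ is fully determined by $f(1,2)$.
   Context: For a bijection $\sigma\colon X\times X\to X\times X$ write $\sigma(x,y)=(\sigma^1(x,y),\sigma^2(x,y))$; for a biquandle $(X,\sigma)$, $s_\sigma\colon X\to X$ is the bijection with $\{(x,y):\sigma(x,y)=(x,y)\}=\{(x,s_\sigma(x))\}$; write $s=s_S$, $s_\beta$. Here $(X,S,\beta)$ is a virtual pair. A noncommutative 2-cocycle pair for a virtual pair $(X,S,\beta)$ with values in a group $H$ is a pair $f,g\colon X\times X\to H$ such that for all $x,y,z\in X$: (f1) $f(x,y)f(S^2(x,y),z)=f(x,S^1(y,z))f(S^2(x,S^1(y,z)),S^2(y,z))$; (f2) $f(S^1(x,y),S^1(S^2(x,y),z))=f(y,z)$; (f3) $f(x,s(x))=1$; (g1) $g(x,s_\beta(x))=1$; (g2) $g(x,y)g(\beta(x,y))=1$; (g3) $g(x,y)g(\beta^2(x,y),z)=g(x,\beta^1(y,z))g(\beta^2(x,\beta^1(y,z)),\beta^2(y,z))$;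 (g4) $g(y,z)g(\beta^2(x,\beta^1(y,z)),\beta^2(y,z))=g(x,y)g(\beta^1(x,y),\beta^1(\beta^2(x,y),z))$; (g5) $g(y,z)g(x,\beta^1(y,z))=g(\beta^2(x,y),z)g(\beta^1(x,y),\beta^1(\beta^2(x,y),z))$; (m1) $g(y,z)=g(S^1(x,y),\beta^1(S^2(x,y),z))$; (m2) $g(y,z)g(x,\beta^1(y,z))=g(S^2(x,y),z)g(S^1(x,y),\beta^1(S^2(x,y),z))$; (m3) $g(x,\beta^1(y,z))f(\beta^2(x,\beta^1(y,z)),\beta^2(y,z))=f(x,y)g(S^2(x,y),z)$. *)

theory Defs
  imports "HOL-Algebra.Group"
begin

definition fix_sec :: "'a set \<Rightarrow> ('a \<times> 'a \<Rightarrow> 'a \<times> 'a) \<Rightarrow> 'a \<Rightarrow> 'a" where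
  "fix_sec X \<sigma> x = (THE y. y \<in> X \<and> \<sigma> (x, y) = (x, y))"

definition nc_cocycle_pair ::
  "('h, 'm) monoid_scheme \<Rightarrow> 'a set \<Rightarrow> ('a \<times> 'a \<Rightarrow> 'a \<times> 'a) \<Rightarrow> ('a \<times> 'a \<Rightarrow> 'a \<times> 'a)
   \<Rightarrow> ('a \<Rightarrow> 'a \<Rightarrow> 'h) \<Rightarrow> ('a \<Rightarrow> 'a \<Rightarrow> 'h) \<Rightarrow> bool" where
  "nc_cocycle_pair H X S \<beta> f g \<longleftrightarrow>
    (\<forall>x\<in>X. \<forall>y\<in>X. f x y \<in> carrier H \<and> g x y \<in> carrier H) \<and>
    (\<forall>x\<in>X. \<forall>y\<in>X. \<forall>z\<in>X.
      \<comment> \<open>(f1)\<close>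
      f x y \<otimes>\<^bsub>H\<^esub> f (snd (S (x, y))) z =
        f x (fst (S (y, z))) \<otimes>\<^bsub>H\<^esub> f (snd (S (x, fst (S (y, z))))) (snd (S (y, z))) \<and>
      \<comment> \<open>(f2)\<close>
      f (fst (S (x, y))) (fst (S (snd (S (x, y)), z))) = f y z \<and>
      \<comment> \<open>(g3)\<close>
      g x y \<otimes>\<^bsub>H\<^esub> g (snd (\<beta> (x, y))) z =
        g x (fst (\<beta> (y, z))) \<otimes>\<^bsub>H\<^esub> g (snd (\<beta> (x, fst (\<beta> (y, z))))) (snd (\<beta> (y, z))) \<and>
      \<comment> \<open>(g4)\<close>
      g y z \<otimes>\<^bsub>H\<^esub> g (snd (\<beta> (x, fst (\<beta> (y, z))))) (snd (\<beta> (y, z))) =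
        g x y \<otimes>\<^bsub>H\<^esub> g (fst (\<beta> (x, y))) (fst (\<beta> (snd (\<beta> (x, y)), z))) \<and>
      \<comment> \<open>(g5)\<close>
      g y z \<otimes>\<^bsub>H\<^esub> g x (fst (\<beta> (y, z))) =
        g (snd (\<beta> (x, y))) z \<otimes>\<^bsub>H\<^esub> g (fst (\<beta> (x, y))) (fst (\<beta> (snd (\<beta> (x, y)), z))) \<and>
      \<comment> \<open>(m1)\<close>
      g y z = g (fst (S (x, y))) (fst (\<beta> (snd (S (x, y)), z))) \<and>
      \<comment> \<open>(m2)\<close>
      g y z \<otimes>\<^bsub>H\<^esub> g x (fst (\<beta> (y, z))) =
        g (snd (S (x, y))) z \<otimes>\<^bsub>H\<^esub> g (fst (S (x, y))) (fst (\<beta> (snd (S (x, y)), z))) \<and>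
      \<comment> \<open>(m3)\<close>
      g x (fst (\<beta> (y, z))) \<otimes>\<^bsub>H\<^esub> f (snd (\<beta> (x, fst (\<beta> (y, z))))) (snd (\<beta> (y, z))) =
        f x y \<otimes>\<^bsub>H\<^esub> g (snd (S (x, y))) z) \<and>
    \<comment> \<open>(f3), (g1)\<close>
    (\<forall>x\<in>X. f x (fix_sec X S x) = \<one>\<^bsub>H\<^esub> \<and> g x (fix_sec X \<beta> x) = \<one>\<^bsub>H\<^esub>) \<and>
    \<comment> \<open>(g2)\<close>
    (\<forall>x\<in>X. \<forall>y\<in>X. g x y \<otimes>\<^bsub>H\<^esub> g (fst (\<beta> (x, y))) (snd (\<beta> (x, y))) = \<one>\<^bsub>H\<^esub>)"

definition cyc :: "nat \<Rightarrow> nat \<Rightarrow> nat" where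
  "cyc n x = (if x = n then 1 else x + 1)"

definition cyc_inv :: "nat \<Rightarrow> nat \<Rightarrow> nat" where
  "cyc_inv n x = (if x = 1 then n else x - 1)"

definition flip :: "'a \<times> 'a \<Rightarrow> 'a \<times> 'a" where
  "flip p = (snd p, fst p)"

definition beta_cyc :: "nat \<Rightarrow> nat \<times> nat \<Rightarrow> nat \<times> nat" where
  "beta_cyc n p = (cyc_inv n (snd p), cyc n (fst p))"

definition triv_op :: "'a \<Rightarrow> 'a \<Rightarrow> 'a" (infixl "\<triangleright>" 70) where
  "x \<triangleright> y = x"

end

theory Submission
  imports Defs
begin

text \<open>For the flip S and beta(x,y) = (a\<inverse>(y), a(x)) most cocycle conditions collapse:
  (f2) becomes trivial, (f1) says that the values f x _ commute, (f3) says f x x = 1,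
  (m1) says that g x is invariant under a\<inverse>, hence constant along the cycle, and (g1)
  forces this constant to be g x (a x) = 1. Once g = 1, (m3) reads f x y = f (a x) (a y),
  and all remaining conditions hold trivially.\<close>

lemma cyc_in: "x \<in> {1..n} \<Longrightarrow> cyc n x \<in> {1..n}"
  by (auto simp: cyc_def)

lemma cyc_inv_in: "x \<in> {1..n} \<Longrightarrow> cyc_inv n x \<in> {1..n}"
  by (auto simp: cyc_inv_def)

lemma cyc_inv_cyc: "x \<in> {1..n} \<Longrightarrow> cyc_inv n (cyc n x) = x"
  by (auto simp: cyc_def cyc_inv_def)

lemma cyc_inv_invariant_const:
  assumes inv: "\<forall>z\<in>{1..n}. h z = h (cyc_inv n z)" and z: "z \<in> {1..n}"
  shows "h z = h 1"
  using z
proof (induction z)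
  case (Suc k)
  show ?case
  proof (cases "k = 0")
    case False
    then have "k \<in> {1..n}" using Suc.prems by auto
    have "h (Suc k) = h (cyc_inv n (Suc k))" using inv Suc.prems by blast
    also have "\<dots> = h k" using False by (simp add: cyc_inv_def)
    finally show ?thesis using Suc.IH[OF \<open>k \<in> {1..n}\<close>] by simp
  qed simp
qed simp

lemma fix_sec_flip: "x \<in> X \<Longrightarrow> fix_sec X flip x = x"
  unfolding fix_sec_def flip_def by (rule the_equality) force+

lemma fix_sec_beta_cyc: "x \<in> {1..n} \<Longrightarrow> fix_sec {1..n} (beta_cyc n) x = cyc n x"
  unfolding fix_sec_def
  by (rule the_equality) (auto simp: beta_cyc_def cyc_inv_cyc cyc_def cyc_inv_def)

context
  fixes H :: "('h, 'm) monoid_scheme" (structure)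
begin

lemma nc_cocycle_pair_carrier:
  "nc_cocycle_pair H X S \<beta> f g \<Longrightarrow> x \<in> X \<Longrightarrow> y \<in> X \<Longrightarrow> f x y \<in> carrier H \<and> g x y \<in> carrier H"
  unfolding nc_cocycle_pair_def by blast

lemma nc_cocycle_pair_fix_sec:
  "nc_cocycle_pair H X S \<beta> f g \<Longrightarrow> x \<in> X \<Longrightarrow> f x (fix_sec X S x) = \<one> \<and> g x (fix_sec X \<beta> x) = \<one>"
  by (simp add: nc_cocycle_pair_def)

lemma nc_cocycle_pair_flip_beta_cyc_f_diag:
  "nc_cocycle_pair H {1..n} flip (beta_cyc n) f g \<Longrightarrow> x \<in> {1..n} \<Longrightarrow> f x x = \<one>"
  using nc_cocycle_pair_fix_sec fix_sec_flip by metis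

lemma nc_cocycle_pair_flip_beta_cyc_g_cyc:
  "nc_cocycle_pair H {1..n} flip (beta_cyc n) f g \<Longrightarrow> x \<in> {1..n} \<Longrightarrow> g x (cyc n x) = \<one>"
  using nc_cocycle_pair_fix_sec fix_sec_beta_cyc by metis

lemma nc_cocycle_pair_flip_beta_cyc_f_comm:
  assumes "nc_cocycle_pair H {1..n} flip (beta_cyc n) f g"
    and "x \<in> {1..n}" "y \<in> {1..n}" "z \<in> {1..n}"
  shows "f x y \<otimes> f x z = f x z \<otimes> f x y"
  using assms by (auto simp: nc_cocycle_pair_def flip_def)

lemma nc_cocycle_pair_flip_beta_cyc_g_cyc_inv:
  assumes "nc_cocycle_pair H {1..n} flip (beta_cyc n) f g"
    and "x \<in> {1..n}" "y \<in> {1..n}"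
  shows "g x y = g x (cyc_inv n y)"
  using assms by (auto simp: nc_cocycle_pair_def flip_def beta_cyc_def)

lemma nc_cocycle_pair_flip_beta_cyc_m3:
  assumes "nc_cocycle_pair H {1..n} flip (beta_cyc n) f g"
    and "x \<in> {1..n}" "y \<in> {1..n}" "z \<in> {1..n}"
  shows "g x (cyc_inv n z) \<otimes> f (cyc n x) (cyc n y) = f x y \<otimes> g x z"
  using assms by (auto simp: nc_cocycle_pair_def flip_def beta_cyc_def)

lemma nc_cocycle_pair_flip_beta_cyc_g_one:
  assumes C: "nc_cocycle_pair H {1..n} flip (beta_cyc n) f g"
    and x: "x \<in> {1..n}" and y: "y \<in> {1..n}"
  shows "g x y = \<one>"
proof -
  have "\<forall>z\<in>{1..n}. g x z = g x (cyc_inv n z)"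
    using nc_cocycle_pair_flip_beta_cyc_g_cyc_inv[OF C x] by blast
  then have "g x y = g x 1" and "g x (cyc n x) = g x 1"
    using cyc_inv_invariant_const y cyc_in[OF x] by blast+
  with nc_cocycle_pair_flip_beta_cyc_g_cyc[OF C x] show ?thesis by simp
qed

lemma nc_cocycle_pair_flip_beta_cyc_f_cyc:
  assumes "group H" and C: "nc_cocycle_pair H {1..n} flip (beta_cyc n) f g"
    and x: "x \<in> {1..n}" and y: "y \<in> {1..n}"
  shows "f x y = f (cyc n x) (cyc n y)"
proof -
  interpret group H by fact
  have "g x (cyc_inv n x) \<otimes> f (cyc n x) (cyc n y) = f x y \<otimes> g x x"
    by (rule nc_cocycle_pair_flip_beta_cyc_m3[OF C x y x])
  moreover have "g x (cyc_inv n x) = \<one>" "g x x = \<one>"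
    using nc_cocycle_pair_flip_beta_cyc_g_one[OF C] x cyc_inv_in[OF x] by blast+
  moreover have "f x y \<in> carrier H" "f (cyc n x) (cyc n y) \<in> carrier H"
    using nc_cocycle_pair_carrier[OF C] x y cyc_in by blast+
  ultimately show ?thesis by simp
qed

lemma nc_cocycle_pair_flip_beta_cycI:
  assumes "group H"
    and car: "\<And>x y. x \<in> {1..n} \<Longrightarrow> y \<in> {1..n} \<Longrightarrow> f x y \<in> carrier H \<and> g x y \<in> carrier H"
    and g_one: "\<And>x y. x \<in> {1..n} \<Longrightarrow> y \<in> {1..n} \<Longrightarrow> g x y = \<one>"
    and f_cyc: "\<And>x y. x \<in> {1..n} \<Longrightarrow> y \<in> {1..n} \<Longrightarrow> f (cyc n x) (cyc n y) = f x y"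
    and f_diag: "\<And>x. x \<in> {1..n} \<Longrightarrow> f x x = \<one>"
    and f_comm: "\<And>x y z. x \<in> {1..n} \<Longrightarrow> y \<in> {1..n} \<Longrightarrow> z \<in> {1..n} \<Longrightarrow>
      f x y \<otimes> f x z = f x z \<otimes> f x y"
  shows "nc_cocycle_pair H {1..n} flip (beta_cyc n) f g"
proof -
  interpret group H by fact
  \<comment> \<open>Hiding the interval keeps the simplifier from rewriting membership into bounds,
    so that the conditional rules below stay applicable.\<close>
  define X where "X = {1..n}"
  have "\<And>x. x \<in> X \<Longrightarrow> cyc n x \<in> X" "\<And>x. x \<in> X \<Longrightarrow> cyc_inv n x \<in> X"
    "\<And>x. x \<in> X \<Longrightarrow> fix_sec X (beta_cyc n) x = cyc n x"
    unfolding X_def by (fact cyc_in cyc_inv_in fix_sec_beta_cyc)+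
  with car g_one f_cyc f_diag f_comm show ?thesis
    unfolding nc_cocycle_pair_def X_def[symmetric]
    by (auto simp: flip_def beta_cyc_def fix_sec_flip)
qed

lemma nc_cocycle_pair_flip_beta_cyc_iff:
  assumes "group H"
    and car: "\<forall>x\<in>{1..n}. \<forall>y\<in>{1..n}. f x y \<in> carrier H \<and> g x y \<in> carrier H"
  shows "nc_cocycle_pair H {1..n} flip (beta_cyc n) f g \<longleftrightarrow>
    (\<forall>x\<in>{1..n}. \<forall>y\<in>{1..n}. g x y = \<one>) \<and>
    (\<forall>x\<in>{1..n}. \<forall>y\<in>{1..n}. \<forall>z\<in>{1..n}.
       f x y = f (cyc n x) (cyc n y) \<and> f x x = \<one> \<and>
       f x y \<otimes> f (x \<triangleright> y) z = f x z \<otimes> f (x \<triangleright> z) (y \<triangleright> z))"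
  unfolding triv_op_def
proof (intro iffI conjI ballI)
  fix x y z
  assume C: "nc_cocycle_pair H {1..n} flip (beta_cyc n) f g"
    and xyz: "x \<in> {1..n}" "y \<in> {1..n}" "z \<in> {1..n}"
  show "g x y = \<one>" "f x y = f (cyc n x) (cyc n y)" "f x x = \<one>"
    "f x y \<otimes> f x z = f x z \<otimes> f x y"
    using nc_cocycle_pair_flip_beta_cyc_g_one[OF C] nc_cocycle_pair_flip_beta_cyc_f_cyc[OF assms(1) C]
      nc_cocycle_pair_flip_beta_cyc_f_diag[OF C] nc_cocycle_pair_flip_beta_cyc_f_comm[OF C] xyz
    by simp_all
next
  assume conds: "(\<forall>x\<in>{1..n}. \<forall>y\<in>{1..n}. g x y = \<one>) \<and>
    (\<forall>x\<in>{1..n}. \<forall>y\<in>{1..n}. \<forall>z\<in>{1..n}.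
       f x y = f (cyc n x) (cyc n y) \<and> f x x = \<one> \<and> f x y \<otimes> f x z = f x z \<otimes> f x y)"
  have f_conds: "f x y = f (cyc n x) (cyc n y) \<and> f x x = \<one> \<and> f x y \<otimes> f x z = f x z \<otimes> f x y"
    if "x \<in> {1..n}" "y \<in> {1..n}" "z \<in> {1..n}" for x y z
    using bspec[OF bspec[OF bspec[OF conjunct2[OF conds] that(1)] that(2)] that(3)] .
  show "nc_cocycle_pair H {1..n} flip (beta_cyc n) f g"
  proof (rule nc_cocycle_pair_flip_beta_cycI[OF assms(1)])
    fix x y z assume "x \<in> {1..n}" "y \<in> {1..n}" "z \<in> {1..n}"
    from f_conds[OF this] show "f x y \<otimes> f x z = f x z \<otimes> f x y" by (elim conjE)
  next
    fix x y assume xy: "x \<in> {1..n}" "y \<in> {1..n}"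
    then show "f x y \<in> carrier H \<and> g x y \<in> carrier H" "g x y = \<one>"
      using car conjunct1[OF conds] by blast+
    from f_conds[OF xy xy(2)] show "f (cyc n x) (cyc n y) = f x y" by (elim conjE) (rule sym)
  next
    fix x assume "x \<in> {1..n}"
    from f_conds[OF this this this] show "f x x = \<one>" by (elim conjE)
  qed
qed

lemma nc_cocycle_pair_flip_beta_cyc_two_unique:
  assumes "group H"
    and C: "nc_cocycle_pair H {1..2} flip (beta_cyc 2) f g"
    and C': "nc_cocycle_pair H {1..2} flip (beta_cyc 2) f' g'"
    and "f 1 2 = f' 1 2" and x: "x \<in> {1..2}" and y: "y \<in> {1..2}"
  shows "f x y = f' x y"
proof -
  have in12: "(1::nat) \<in> {1..2}" "(2::nat) \<in> {1..2}" by simp_all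
  have cyc2: "cyc 2 1 = 2" "cyc 2 2 = 1" by (simp_all add: cyc_def)
  have "f 1 2 = f 2 1" "f' 1 2 = f' 2 1"
    using nc_cocycle_pair_flip_beta_cyc_f_cyc[OF assms(1) C in12]
      nc_cocycle_pair_flip_beta_cyc_f_cyc[OF assms(1) C' in12]
    unfolding cyc2 .
  moreover have "f x x = \<one>" "f' x x = \<one>" "f y y = \<one>" "f' y y = \<one>"
    using nc_cocycle_pair_flip_beta_cyc_f_diag[OF C] nc_cocycle_pair_flip_beta_cyc_f_diag[OF C'] x y
    by blast+
  moreover have "x = 1 \<or> x = 2" "y = 1 \<or> y = 2"
    using x y by auto
  ultimately show ?thesis
    using \<open>f 1 2 = f' 1 2\<close> by auto
qed

end

theorem mainTheorem4:
  fixes H :: "('h, 'm) monoid_scheme" (structure)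
    and n :: nat
  assumes "group H"
  shows "(\<forall>f g. (\<forall>x\<in>{1..n}. \<forall>y\<in>{1..n}. f x y \<in> carrier H \<and> g x y \<in> carrier H) \<longrightarrow>
            (nc_cocycle_pair H {1..n} flip (beta_cyc n) f g \<longleftrightarrow>
              (\<forall>x\<in>{1..n}. \<forall>y\<in>{1..n}. g x y = \<one>) \<and>
              (\<forall>x\<in>{1..n}. \<forall>y\<in>{1..n}. \<forall>z\<in>{1..n}.
                 f x y = f (cyc n x) (cyc n y) \<and> f x x = \<one> \<and>
                 f x y \<otimes> f (x \<triangleright> y) z = f x z \<otimes> f (x \<triangleright> z) (y \<triangleright> z)))) \<and>
         (n = 2 \<longrightarrow> (\<forall>f g f' g'. nc_cocycle_pair H {1..n} flip (beta_cyc n) f g \<longrightarrow>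
            nc_cocycle_pair H {1..n} flip (beta_cyc n) f' g' \<longrightarrow> f 1 2 = f' 1 2 \<longrightarrow>
            (\<forall>x\<in>{1..n}. \<forall>y\<in>{1..n}. f x y = f' x y)))"
proof (intro conjI allI impI ballI)
  fix f g
  assume "\<forall>x\<in>{1..n}. \<forall>y\<in>{1..n}. f x y \<in> carrier H \<and> g x y \<in> carrier H"
  then show "nc_cocycle_pair H {1..n} flip (beta_cyc n) f g \<longleftrightarrow>
      (\<forall>x\<in>{1..n}. \<forall>y\<in>{1..n}. g x y = \<one>) \<and>
      (\<forall>x\<in>{1..n}. \<forall>y\<in>{1..n}. \<forall>z\<in>{1..n}.
         f x y = f (cyc n x) (cyc n y) \<and> f x x = \<one> \<and>
         f x y \<otimes> f (x \<triangleright> y) z = f x z \<otimes> f (x \<triangleright> z) (y \<triangleright> z))"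
    by (rule nc_cocycle_pair_flip_beta_cyc_iff[OF assms])
next
  fix f g f' g' x y
  assume "n = 2" "nc_cocycle_pair H {1..n} flip (beta_cyc n) f g"
    "nc_cocycle_pair H {1..n} flip (beta_cyc n) f' g'" "f 1 2 = f' 1 2" "x \<in> {1..n}" "y \<in> {1..n}"
  then show "f x y = f' x y"
    using nc_cocycle_pair_flip_beta_cyc_two_unique[OF assms] by simp
qed

end
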